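(* For every $\epsilon\in(0,1)$ there exists a positive integer $K=K(\epsilon)$ such that for every pair $\vec f=(f,g)\in F\times F$ and every $n>0$ there is a measurable set $S\subseteq\Omega^\infty$ with $f(S)\ge1-\epsilon$ (where $f$ is the measure induced by $\vec f$) such that every $\omega\in S$ satisfies at least one of the following: (1) $\vec f$ is $\epsilon$-close along $\omega$ at all but at most $K$ periods $t\in\{1,\dots,n\}$; or (2) $\omega\in L^{\vec f}_{\mathcal D,1-\epsilon}$, and moreover $|\mathcal D_t(\omega,\vec f)-\mathcal D_n(\omega,\vec f)|<\epsilon$ for all $t\ge n$.
   Context: Let $\Omega=\{0,1\}$, $\Omega^\infty$ the set of infinite sequences $\omega=(\omega_1,\omega_2,\dots)$, and $\omega^t=(\omega_1,\dots,\omega_t)$ (also used for the cylinder set of all sequences with this prefix; $\omega^0=\emptyset$). $\mathcal G_t$ is the $\sigma$-algebra generated by the length-$t$ cylinders and $\mathcal G_\infty$ the $\sigma$-algebra generated by all cylinders. $\Delta(\Omega)$ is the set of probability distributions on $\Omega$; for $p\in\Delta(\Omega)$ and $x\in\Omega$, $p[x]$ is the probability of $x$. A forecasting strategy is a map $f:\bigcup_{t\ge0}(\Omega\times\Delta(\Omega)\times\Delta(\Omega))^t\to\Delta(\Omega)$; $F$ is the set of all forecasting strategies. Given an ordered pair $\vec f=(f,g)\in F\times F$ and $\omega\in\Omega^\infty$, the play path $(\omega,\vec f)$ is defined recursively: $(\omega,\vec f)^0=\emptyset$ and its $t$-th entry is $(\omega_t,f((\omega,\vec f)^{t-1}),g((\omega,\vec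 f)^{t-1}))$, where $(\omega,\vec f)^t$ is its prefix of length $t$. The pair $\vec f$ induces two probability measures on $(\Omega^\infty,\mathcal G_\infty)$, again denoted $f$ and $g$, determined by $f(\omega^t)=\prod_{n=1}^t f((\omega,\vec f)^{n-1})[\omega_n]$ and $g(\omega^t)=\prod_{n=1}^t g((\omega,\vec f)^{n-1})[\omega_n]$. The finite derivative test $\mathcal D$: for $t\ge0$, $\mathcal D_{t+1}(\omega,\vec f)=\frac{f(\omega^t)}{f(\omega^t)+g(\omega^t)}$ if $f(\omega^t)>0$ or $g(\omega^t)>0$, and $\frac12$ otherwise. For a test $T$, $T(\omega,\vec f)=\lim_tT_t(\omega,\vec f)$ when it exists, and $L^{\vec f}_{T,\epsilon}=\{\omega:T(\omega,\vec f)\text{ exists and }>\epsilon\}$. The pair $\vec f$ is $\epsilon$-close along $\omega$ at period $t>0$ if $|f((\omega,\vec f)^{t-1})[\omega_t]-g((\omega,\vec f)^{t-1})[\omega_t]|<\epsilon$. *)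

theory Defs
  imports "HOL-Probability.Probability"
begin

text \<open>Omega = bool (False = 0, True = 1); Delta(Omega) = bool pmf.
  An infinite sequence omega is a function nat => bool, where omega i is the
  paper's omega_(i+1).  A history entry is (outcome, forecast of f, forecast of g).\<close>

type_synonym history = "(bool \<times> bool pmf \<times> bool pmf) list"
type_synonym strategy = "history \<Rightarrow> bool pmf"

fun play_path :: "strategy \<Rightarrow> strategy \<Rightarrow> (nat \<Rightarrow> bool) \<Rightarrow> nat \<Rightarrow> history" where
  "play_path f g \<omega> 0 = []"
| "play_path f g \<omega> (Suc t) =
     play_path f g \<omega> t @ [(\<omega> t, f (play_path f g \<omega> t), g (play_path f g \<omega> t))]"

definition cyl :: "(nat \<Rightarrow> bool) \<Rightarrow> nat \<Rightarrow> (nat \<Rightarrow> bool) set" where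
  "cyl \<omega> t = {\<omega>'. \<forall>i<t. \<omega>' i = \<omega> i}"

definition G_inf :: "(nat \<Rightarrow> bool) measure" where
  "G_inf = sigma UNIV {cyl \<omega> t | \<omega> t. True}"

definition fst_cyl_prob :: "strategy \<Rightarrow> strategy \<Rightarrow> (nat \<Rightarrow> bool) \<Rightarrow> nat \<Rightarrow> real" where
  "fst_cyl_prob f g \<omega> t = (\<Prod>i<t. pmf (f (play_path f g \<omega> i)) (\<omega> i))"

definition snd_cyl_prob :: "strategy \<Rightarrow> strategy \<Rightarrow> (nat \<Rightarrow> bool) \<Rightarrow> nat \<Rightarrow> real" where
  "snd_cyl_prob f g \<omega> t = (\<Prod>i<t. pmf (g (play_path f g \<omega> i)) (\<omega> i))"

definition induced_measure_fst :: "strategy \<Rightarrow> strategy \<Rightarrow> (nat \<Rightarrow> bool) measure \<Rightarrow> bool" where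
  "induced_measure_fst f g M \<longleftrightarrow> prob_space M \<and> sets M = sets G_inf \<and>
     (\<forall>\<omega> t. measure M (cyl \<omega> t) = fst_cyl_prob f g \<omega> t)"

text \<open>Finite derivative test: D_(t+1) for t >= 0 (the value at index 0 is
  irrelevant and set equal to D_1).\<close>
definition D_test :: "strategy \<Rightarrow> strategy \<Rightarrow> (nat \<Rightarrow> bool) \<Rightarrow> nat \<Rightarrow> real" where
  "D_test f g \<omega> s = (let t = s - 1 in
     if fst_cyl_prob f g \<omega> t > 0 \<or> snd_cyl_prob f g \<omega> t > 0
     then fst_cyl_prob f g \<omega> t / (fst_cyl_prob f g \<omega> t + snd_cyl_prob f g \<omega> t)
     else 1/2)"

definition L_D :: "strategy \<Rightarrow> strategy \<Rightarrow> real \<Rightarrow> (nat \<Rightarrow> bool) set" where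
  "L_D f g \<epsilon> = {\<omega>. convergent (D_test f g \<omega>) \<and> lim (D_test f g \<omega>) > \<epsilon>}"

definition eps_close :: "strategy \<Rightarrow> strategy \<Rightarrow> real \<Rightarrow> (nat \<Rightarrow> bool) \<Rightarrow> nat \<Rightarrow> bool" where
  "eps_close f g \<epsilon> \<omega> t \<longleftrightarrow>
     \<bar>pmf (f (play_path f g \<omega> (t - 1))) (\<omega> (t - 1)) - pmf (g (play_path f g \<omega> (t - 1))) (\<omega> (t - 1))\<bar> < \<epsilon>"

end

theory Submission
  imports Defs
begin

text \<open>Outcome strings are finite bool lists; F and G denote the probabilities that f and g assign
  to a string along the play, and D = F / (F + G). Under the measure of f three events are unlikely.
  (1) If N counts the periods with \<epsilon>-far forecasts, sqrt (F G) / sqrt (1 - \<epsilon>^2)^N is a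
  supermartingale of total mass at most 1 (the Hellinger affinity of two distributions on Bool at
  distance \<epsilon> is at most sqrt (1 - \<epsilon>^2)); since F \<le> sqrt (F G / \<eta>) when 1 - D > \<eta>, having at
  least K disagreements up to some time together with 1 - D > \<eta> at that time has probability at
  most sqrt (1 - \<epsilon>^2)^K / sqrt \<eta>. (2) F (1 - D) = F G / (F + G) is a supermartingale, so by Ville's
  inequality 1 - D, once at most \<eta>, rarely climbs back to \<epsilon> / 2. (3) D is a martingale under
  F + G with bounded second moment, so by Doob's inequality it converges outside a set of small
  probability. Off these three events, many disagreements force D to stay within \<epsilon> / 2 of 1
  from time n on and to converge.\<close>

text \<open>Beyond its length a string is padded with False.\<close>

definition seq_of_list :: "bool list \<Rightarrow> nat \<Rightarrow> bool" where
  "seq_of_list xs i = (if i < length xs then xs ! i else False)"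

definition prefix_seq :: "(nat \<Rightarrow> bool) \<Rightarrow> nat \<Rightarrow> bool list" where
  "prefix_seq \<omega> m = map \<omega> [0..<m]"

lemma length_prefix_seq [simp]: "length (prefix_seq \<omega> m) = m"
  by (simp add: prefix_seq_def)

lemma seq_of_list_prefix_seq: "j < m \<Longrightarrow> seq_of_list (prefix_seq \<omega> m) j = \<omega> j"
  by (simp add: seq_of_list_def prefix_seq_def)

lemma prefix_seq_seq_of_list: "length xs = m \<Longrightarrow> prefix_seq (seq_of_list xs) m = xs"
  by (intro nth_equalityI) (auto simp: prefix_seq_def seq_of_list_def)

lemma take_prefix_seq: "k \<le> m \<Longrightarrow> take k (prefix_seq \<omega> m) = prefix_seq \<omega> k"
  by (simp add: prefix_seq_def take_map)

lemma finite_bool_lists_length: "finite {xs :: bool list. length xs = m \<and> P xs}"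
  using finite_lists_length_eq[of "UNIV :: bool set" m] by (rule rev_finite_subset) auto

lemma sum_bool_lists_filter:
  "(\<Sum>xs | length xs = m \<and> P xs. h xs) = (\<Sum>xs | length xs = m. if P xs then h xs else 0)"
  for h :: "bool list \<Rightarrow> real"
  using sum.inter_filter[OF finite_bool_lists_length[of m "\<lambda>_. True"], of h P] by simp

lemma sum_bool_lists_length_Suc:
  "(\<Sum>xs | length xs = Suc m. h xs) = (\<Sum>xs | length xs = m. h (xs @ [True]) + h (xs @ [False]))"
  for h :: "bool list \<Rightarrow> real"
proof -
  have eq: "{xs :: bool list. length xs = Suc m} = (\<lambda>(xs, b). xs @ [b]) ` ({xs. length xs = m} \<times> UNIV)"
  proof (rule set_eqI, rule iffI)
    fix ys :: "bool list" assume "ys \<in> {xs. length xs = Suc m}"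
    hence "ys = butlast ys @ [last ys]" "length (butlast ys) = m"
      by (auto intro: append_butlast_last_id[symmetric])
    thus "ys \<in> (\<lambda>(xs, b). xs @ [b]) ` ({xs. length xs = m} \<times> UNIV)"
      by (metis (mono_tags, lifting) SigmaI UNIV_I case_prod_conv image_eqI mem_Collect_eq)
  qed auto
  have inj: "inj_on (\<lambda>(xs, b). xs @ [b]) ({xs :: bool list. length xs = m} \<times> UNIV)"
    by (auto simp: inj_on_def)
  have "(\<Sum>xs | length xs = Suc m. h xs) = (\<Sum>(xs, b) \<in> {xs. length xs = m} \<times> UNIV. h (xs @ [b]))"
    unfolding eq by (subst sum.reindex[OF inj]) (simp add: case_prod_unfold comp_def)
  also have "\<dots> = (\<Sum>xs | length xs = m. \<Sum>b\<in>UNIV. h (xs @ [b]))"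
    by (rule sum.cartesian_product[symmetric])
  finally show ?thesis by (simp add: UNIV_bool add.commute)
qed

section \<open>Maximal inequalities on the binary tree\<close>

definition reaches :: "real \<Rightarrow> (bool list \<Rightarrow> real) \<Rightarrow> nat \<Rightarrow> nat \<Rightarrow> bool list \<Rightarrow> bool" where
  "reaches lam Y n m xs \<longleftrightarrow> (\<exists>k\<in>{n..m}. lam \<le> Y (take k xs))"

lemma reaches_snoc:
  assumes "length xs = m" "n \<le> m"
  shows "reaches lam Y n (Suc m) (xs @ [x]) \<longleftrightarrow> reaches lam Y n m xs \<or> lam \<le> Y (xs @ [x])"
  using assms by (auto simp: reaches_def atLeastAtMostSuc_conv)

lemma reaches_start: "length xs = n \<Longrightarrow> reaches lam Y n n xs \<longleftrightarrow> lam \<le> Y xs"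
  by (simp add: reaches_def)

text \<open>Proved by freezing Y at the level lam once it has been reached.\<close>

lemma ville_inequality:
  fixes w Y :: "bool list \<Rightarrow> real"
  assumes w_nonneg: "\<And>xs. 0 \<le> w xs" and Y_nonneg: "\<And>xs. 0 \<le> Y xs"
    and w_split: "\<And>xs. w (xs @ [True]) + w (xs @ [False]) = w xs"
    and super: "\<And>xs. n \<le> length xs \<Longrightarrow>
       w (xs @ [True]) * Y (xs @ [True]) + w (xs @ [False]) * Y (xs @ [False]) \<le> w xs * Y xs"
    and "n \<le> m"
  shows "lam * (\<Sum>xs | length xs = m \<and> reaches lam Y n m xs. w xs) \<le> (\<Sum>xs | length xs = n. w xs * Y xs)"
proof -
  define Psi where
    "Psi m = (\<Sum>xs | length xs = m. w xs * (if reaches lam Y n m xs then lam else Y xs))" for m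
  have "Psi m \<le> Psi n"
    using \<open>n \<le> m\<close>
  proof (induction m rule: dec_induct)
    case (step m)
    have "Psi (Suc m) \<le> Psi m"
      unfolding Psi_def sum_bool_lists_length_Suc
    proof (rule sum_mono)
      fix xs :: "bool list" assume "xs \<in> {xs. length xs = m}"
      hence R: "reaches lam Y n (Suc m) (xs @ [x]) \<longleftrightarrow> reaches lam Y n m xs \<or> lam \<le> Y (xs @ [x])" for x
        using reaches_snoc step.hyps by simp
      have frozen: "w (xs @ [x]) * (if reaches lam Y n (Suc m) (xs @ [x]) then lam else Y (xs @ [x]))
          \<le> w (xs @ [x]) * Y (xs @ [x])" if "\<not> reaches lam Y n m xs" for x
        using R that w_nonneg[of "xs @ [x]"] by (auto intro: mult_left_mono)
      show "w (xs @ [True]) * (if reaches lam Y n (Suc m) (xs @ [True]) then lam else Y (xs @ [True])) +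
          w (xs @ [False]) * (if reaches lam Y n (Suc m) (xs @ [False]) then lam else Y (xs @ [False]))
          \<le> w xs * (if reaches lam Y n m xs then lam else Y xs)"
        using R w_split[of xs] frozen[of True] frozen[of False] super[of xs] \<open>xs \<in> _\<close> step.hyps
        by (cases "reaches lam Y n m xs") (auto simp: distrib_right[symmetric])
    qed
    with step.IH show ?case by linarith
  qed simp
  moreover have "lam * (\<Sum>xs | length xs = m \<and> reaches lam Y n m xs. w xs) \<le> Psi m"
    unfolding Psi_def sum_bool_lists_filter sum_distrib_left
    by (rule sum_mono) (use w_nonneg Y_nonneg in auto)
  moreover have "Psi n \<le> (\<Sum>xs | length xs = n. w xs * Y xs)"
    unfolding Psi_def by (rule sum_mono) (use w_nonneg in \<open>auto simp: reaches_start intro: mult_left_mono\<close>)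
  ultimately show ?thesis by linarith
qed

lemma doob_maximal_inequality:
  fixes w X :: "bool list \<Rightarrow> real"
  assumes w_nonneg: "\<And>xs. 0 \<le> w xs" and X_nonneg: "\<And>xs. 0 \<le> X xs"
    and w_split: "\<And>xs. w (xs @ [True]) + w (xs @ [False]) = w xs"
    and sub: "\<And>xs. n \<le> length xs \<Longrightarrow>
       w xs * X xs \<le> w (xs @ [True]) * X (xs @ [True]) + w (xs @ [False]) * X (xs @ [False])"
    and "n \<le> m"
  shows "lam * (\<Sum>xs | length xs = m \<and> reaches lam X n m xs. w xs) \<le> (\<Sum>xs | length xs = m. w xs * X xs)"
proof -
  define Excess where
    "Excess m = (\<Sum>xs | length xs = m. w xs * (if reaches lam X n m xs then X xs - lam else 0))" for m
  have "Excess n \<le> Excess m"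
    using \<open>n \<le> m\<close>
  proof (induction m rule: dec_induct)
    case (step m)
    have "Excess m \<le> Excess (Suc m)"
      unfolding Excess_def sum_bool_lists_length_Suc
    proof (rule sum_mono)
      fix xs :: "bool list" assume xs: "xs \<in> {xs. length xs = m}"
      hence R: "reaches lam X n (Suc m) (xs @ [x]) \<longleftrightarrow> reaches lam X n m xs \<or> lam \<le> X (xs @ [x])" for x
        using reaches_snoc step.hyps by simp
      show "w xs * (if reaches lam X n m xs then X xs - lam else 0) \<le>
          w (xs @ [True]) * (if reaches lam X n (Suc m) (xs @ [True]) then X (xs @ [True]) - lam else 0) +
          w (xs @ [False]) * (if reaches lam X n (Suc m) (xs @ [False]) then X (xs @ [False]) - lam else 0)"
      proof (cases "reaches lam X n m xs")
        case True
        have "lam * w xs = lam * w (xs @ [True]) + lam * w (xs @ [False])"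
          using w_split[of xs] by (metis distrib_left)
        thus ?thesis using True R sub[of xs] xs step.hyps by (simp add: algebra_simps)
      next
        case False
        have "0 \<le> w (xs @ [x]) * (if reaches lam X n (Suc m) (xs @ [x]) then X (xs @ [x]) - lam else 0)" for x
          using R False w_nonneg[of "xs @ [x]"] by auto
        from this[of True] this[of False] False show ?thesis by simp
      qed
    qed
    with step.IH show ?case by linarith
  qed simp
  moreover have "0 \<le> Excess n"
    unfolding Excess_def by (rule sum_nonneg) (use w_nonneg in \<open>auto simp: reaches_start\<close>)
  moreover have "Excess m + lam * (\<Sum>xs | length xs = m \<and> reaches lam X n m xs. w xs)
      \<le> (\<Sum>xs | length xs = m. w xs * X xs)"
    unfolding Excess_def sum_bool_lists_filter sum_distrib_left sum.distrib[symmetric]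
    by (rule sum_mono) (use w_nonneg X_nonneg in \<open>auto simp: algebra_simps\<close>)
  ultimately show ?thesis by linarith
qed

lemma play_path_cong: "(\<And>j. j < i \<Longrightarrow> \<omega> j = \<omega>' j) \<Longrightarrow> play_path f g \<omega> i = play_path f g \<omega>' i"
  by (induction i) auto

definition play_history :: "strategy \<Rightarrow> strategy \<Rightarrow> bool list \<Rightarrow> history" where
  "play_history f g xs = play_path f g (seq_of_list xs) (length xs)"

lemma play_history_prefix_seq: "play_history f g (prefix_seq \<omega> i) = play_path f g \<omega> i"
  unfolding play_history_def length_prefix_seq
  by (rule play_path_cong) (simp add: seq_of_list_prefix_seq)

text \<open>The forecaster h is one of f, g; the forecasts are those made along the play of the pair
  (f, g).\<close>

definition path_prob :: "strategy \<Rightarrow> strategy \<Rightarrow> strategy \<Rightarrow> bool list \<Rightarrow> real" where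
  "path_prob h f g xs = (\<Prod>i<length xs. pmf (h (play_path f g (seq_of_list xs) i)) (seq_of_list xs i))"

lemma prod_pmf_play_path_eq_path_prob:
  "(\<Prod>i<t. pmf (h (play_path f g \<omega> i)) (\<omega> i)) = path_prob h f g (prefix_seq \<omega> t)"
  unfolding path_prob_def
proof (rule prod.cong)
  fix i assume "i \<in> {..<length (prefix_seq \<omega> t)}"
  hence i: "i < t" by simp
  have "play_path f g \<omega> i = play_path f g (seq_of_list (prefix_seq \<omega> t)) i"
    by (rule play_path_cong) (use i in \<open>auto simp: seq_of_list_prefix_seq\<close>)
  thus "pmf (h (play_path f g \<omega> i)) (\<omega> i) =
      pmf (h (play_path f g (seq_of_list (prefix_seq \<omega> t)) i)) (seq_of_list (prefix_seq \<omega> t) i)"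
    using i by (simp add: seq_of_list_prefix_seq)
qed simp

lemma fst_cyl_prob_eq_path_prob: "fst_cyl_prob f g \<omega> t = path_prob f f g (prefix_seq \<omega> t)"
  unfolding fst_cyl_prob_def by (rule prod_pmf_play_path_eq_path_prob)

lemma snd_cyl_prob_eq_path_prob: "snd_cyl_prob f g \<omega> t = path_prob g f g (prefix_seq \<omega> t)"
  unfolding snd_cyl_prob_def by (rule prod_pmf_play_path_eq_path_prob)

lemma path_prob_Nil [simp]: "path_prob h f g [] = 1"
  by (simp add: path_prob_def)

lemma path_prob_snoc: "path_prob h f g (xs @ [x]) = path_prob h f g xs * pmf (h (play_history f g xs)) x"
proof -
  have seq: "seq_of_list (xs @ [x]) j = seq_of_list xs j" if "j < length xs" for j
    using that by (simp add: seq_of_list_def nth_append)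
  have play: "play_path f g (seq_of_list (xs @ [x])) i = play_path f g (seq_of_list xs) i"
    if "i \<le> length xs" for i
    by (rule play_path_cong) (use that in \<open>simp add: seq\<close>)
  have "path_prob h f g (xs @ [x]) = (\<Prod>i<length xs.
      pmf (h (play_path f g (seq_of_list (xs @ [x])) i)) (seq_of_list (xs @ [x]) i)) *
      pmf (h (play_history f g xs)) x"
    by (simp add: path_prob_def play play_history_def seq_of_list_def)
  also have "(\<Prod>i<length xs. pmf (h (play_path f g (seq_of_list (xs @ [x])) i)) (seq_of_list (xs @ [x]) i))
      = path_prob h f g xs"
    unfolding path_prob_def by (rule prod.cong) (auto simp: play seq)
  finally show ?thesis .
qed

lemma path_prob_nonneg: "0 \<le> path_prob h f g xs"
  by (simp add: path_prob_def prod_nonneg)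

lemma path_prob_split: "path_prob h f g (xs @ [True]) + path_prob h f g (xs @ [False]) = path_prob h f g xs"
  by (simp add: path_prob_snoc pmf_False_conv_True algebra_simps)

lemma sum_path_prob: "(\<Sum>xs | length xs = m. path_prob h f g xs) = 1"
  by (induction m) (simp_all add: sum_bool_lists_length_Suc path_prob_split)

lemma induced_measure_prob_space: "induced_measure_fst f g M \<Longrightarrow> prob_space M"
  by (simp add: induced_measure_fst_def)

lemma cyl_in_sets: "induced_measure_fst f g M \<Longrightarrow> cyl \<omega> t \<in> sets M"
  unfolding induced_measure_fst_def G_inf_def by (auto simp: sets_measure_of intro: sigma_sets.Basic)

lemma prefix_event_eq_UN_cyl:
  "{\<omega>. P (prefix_seq \<omega> m)} = (\<Union>xs\<in>{xs. length xs = m \<and> P xs}. cyl (seq_of_list xs) m)"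
proof (rule set_eqI, rule iffI)
  fix \<omega> assume "\<omega> \<in> {\<omega>. P (prefix_seq \<omega> m)}"
  thus "\<omega> \<in> (\<Union>xs\<in>{xs. length xs = m \<and> P xs}. cyl (seq_of_list xs) m)"
    by (intro UN_I[of "prefix_seq \<omega> m"]) (auto simp: cyl_def seq_of_list_prefix_seq)
next
  fix \<omega> assume "\<omega> \<in> (\<Union>xs\<in>{xs. length xs = m \<and> P xs}. cyl (seq_of_list xs) m)"
  then obtain xs where xs: "length xs = m" "P xs" "\<forall>i<m. \<omega> i = seq_of_list xs i"
    by (auto simp: cyl_def)
  have "prefix_seq \<omega> m = xs"
    using xs by (intro nth_equalityI) (auto simp: prefix_seq_def seq_of_list_def)
  thus "\<omega> \<in> {\<omega>. P (prefix_seq \<omega> m)}" using xs by simp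
qed

lemma prefix_event_in_sets: "induced_measure_fst f g M \<Longrightarrow> {\<omega>. P (prefix_seq \<omega> m)} \<in> sets M"
  unfolding prefix_event_eq_UN_cyl
  by (rule sets.finite_UN) (auto simp: finite_bool_lists_length cyl_in_sets)

lemma measure_prefix_event_le:
  assumes M: "induced_measure_fst f g M"
  shows "measure M {\<omega>. P (prefix_seq \<omega> m)} \<le> (\<Sum>xs | length xs = m \<and> P xs. path_prob f f g xs)"
proof -
  have "measure M {\<omega>. P (prefix_seq \<omega> m)} \<le>
      (\<Sum>xs | length xs = m \<and> P xs. measure M (cyl (seq_of_list xs) m))"
    unfolding prefix_event_eq_UN_cyl
    by (rule measure_UNION_le) (auto simp: finite_bool_lists_length cyl_in_sets[OF M])
  also have "\<dots> = (\<Sum>xs | length xs = m \<and> P xs. path_prob f f g xs)"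
    using M by (intro sum.cong) (auto simp: induced_measure_fst_def fst_cyl_prob_eq_path_prob
        prefix_seq_seq_of_list)
  finally show ?thesis .
qed

lemma reaching_event_eq:
  "{\<omega>. \<exists>k\<in>{n..m}. lam \<le> Y (prefix_seq \<omega> k)} = {\<omega>. reaches lam Y n m (prefix_seq \<omega> m)}"
  by (auto simp: reaches_def take_prefix_seq)

lemma measure_reaching_event_le:
  assumes M: "induced_measure_fst f g M"
    and bound: "\<And>m. n \<le> m \<Longrightarrow> (\<Sum>xs | length xs = m \<and> reaches lam Y n m xs. path_prob f f g xs) \<le> b"
  shows "{\<omega>. \<exists>k\<ge>n. lam \<le> Y (prefix_seq \<omega> k)} \<in> sets M"
    and "measure M {\<omega>. \<exists>k\<ge>n. lam \<le> Y (prefix_seq \<omega> k)} \<le> b"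
proof -
  interpret prob_space M using M by (rule induced_measure_prob_space)
  define A where "A d = {\<omega>. \<exists>k\<in>{n..n + d}. lam \<le> Y (prefix_seq \<omega> k)}" for d
  have A_sets: "A d \<in> sets M" for d
    unfolding A_def reaching_event_eq by (rule prefix_event_in_sets[OF M])
  have eq: "{\<omega>. \<exists>k\<ge>n. lam \<le> Y (prefix_seq \<omega> k)} = (\<Union>d. A d)"
    unfolding A_def by (auto, metis atLeastAtMost_iff le_add_diff_inverse order_refl)
  show "{\<omega>. \<exists>k\<ge>n. lam \<le> Y (prefix_seq \<omega> k)} \<in> sets M"
    unfolding eq using A_sets by blast
  have "(\<lambda>d. measure M (A d)) \<longlonglongrightarrow> measure M (\<Union>d. A d)"
    by (rule finite_Lim_measure_incseq) (use A_sets in \<open>auto simp: incseq_def A_def\<close>)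
  moreover have "measure M (A d) \<le> b" for d
    unfolding A_def reaching_event_eq
    using measure_prefix_event_le[OF M] bound[of "n + d"] by (rule order_trans) simp
  ultimately show "measure M {\<omega>. \<exists>k\<ge>n. lam \<le> Y (prefix_seq \<omega> k)} \<le> b"
    unfolding eq by (intro LIMSEQ_le_const2) auto
qed

section \<open>The derivative test along finite strings\<close>

definition D_list :: "strategy \<Rightarrow> strategy \<Rightarrow> bool list \<Rightarrow> real" where
  "D_list f g xs = (if 0 < path_prob f f g xs \<or> 0 < path_prob g f g xs
     then path_prob f f g xs / (path_prob f f g xs + path_prob g f g xs) else 1/2)"

lemma D_test_Suc: "D_test f g \<omega> (Suc k) = D_list f g (prefix_seq \<omega> k)"
  by (simp add: D_test_def D_list_def fst_cyl_prob_eq_path_prob snd_cyl_prob_eq_path_prob)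

lemma D_list_nonneg: "0 \<le> D_list f g xs"
  and D_list_le_1: "D_list f g xs \<le> 1"
  using path_prob_nonneg[of f f g xs] path_prob_nonneg[of g f g xs]
  by (auto simp: D_list_def divide_simps)

definition total_prob :: "strategy \<Rightarrow> strategy \<Rightarrow> bool list \<Rightarrow> real" where
  "total_prob f g xs = path_prob f f g xs + path_prob g f g xs"

lemma total_prob_nonneg: "0 \<le> total_prob f g xs"
  by (simp add: total_prob_def path_prob_nonneg)

lemma path_prob_le_total_prob: "path_prob f f g xs \<le> total_prob f g xs"
  by (simp add: total_prob_def path_prob_nonneg)

lemma total_prob_split: "total_prob f g (xs @ [True]) + total_prob f g (xs @ [False]) = total_prob f g xs"
  using path_prob_split[of f f g xs] path_prob_split[of g f g xs] by (simp add: total_prob_def)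

lemma total_prob_mult_D_list: "total_prob f g xs * D_list f g xs = path_prob f f g xs"
  using path_prob_nonneg[of f f g xs] path_prob_nonneg[of g f g xs]
  by (auto simp: total_prob_def D_list_def divide_simps)

lemma D_list_martingale:
  "(total_prob f g (xs @ [True]) + total_prob f g (xs @ [False])) * D_list f g xs =
   total_prob f g (xs @ [True]) * D_list f g (xs @ [True]) + total_prob f g (xs @ [False]) * D_list f g (xs @ [False])"
  by (simp add: total_prob_split total_prob_mult_D_list path_prob_split)

lemma weighted_mean_square_le:
  fixes a b d d1 d2 :: real
  assumes "0 \<le> a" "0 \<le> b" "(a + b) * d = a * d1 + b * d2"
  shows "(a + b) * d\<^sup>2 \<le> a * d1\<^sup>2 + b * d2\<^sup>2"
proof -
  have "(a + b) * ((a + b) * d\<^sup>2) = (a * d1 + b * d2)\<^sup>2"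
    using assms(3) by (metis power2_eq_square power_mult_distrib mult.assoc)
  also have "\<dots> = (a + b) * (a * d1\<^sup>2 + b * d2\<^sup>2) - a * b * (d1 - d2)\<^sup>2"
    by (simp add: power2_eq_square algebra_simps)
  also have "\<dots> \<le> (a + b) * (a * d1\<^sup>2 + b * d2\<^sup>2)"
    using assms by simp
  finally show ?thesis
    using assms by (cases "a + b = 0") (simp_all add: mult_le_cancel_left)
qed

lemma weighted_square_shift:
  fixes a b c d d1 d2 :: real
  assumes "(a + b) * d = a * d1 + b * d2"
  shows "a * (d1 - c)\<^sup>2 + b * (d2 - c)\<^sup>2 - (a + b) * (d - c)\<^sup>2 = a * d1\<^sup>2 + b * d2\<^sup>2 - (a + b) * d\<^sup>2"
proof -
  have "a * (d1 - c)\<^sup>2 + b * (d2 - c)\<^sup>2 = a * d1\<^sup>2 + b * d2\<^sup>2 - 2 * c * (a * d1 + b * d2) + c\<^sup>2 * (a + b)"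
    and "(a + b) * (d - c)\<^sup>2 = (a + b) * d\<^sup>2 - 2 * c * ((a + b) * d) + c\<^sup>2 * (a + b)"
    by (simp_all add: power2_eq_square algebra_simps)
  thus ?thesis using assms by simp
qed

text \<open>The second moment of the martingale D under total_prob; being bounded and nondecreasing,
  it controls the oscillations of D through Doob's inequality.\<close>

definition energy :: "strategy \<Rightarrow> strategy \<Rightarrow> nat \<Rightarrow> real" where
  "energy f g m = (\<Sum>xs | length xs = m. total_prob f g xs * (D_list f g xs)\<^sup>2)"

lemma D_list_square_submartingale:
  "total_prob f g xs * (D_list f g xs)\<^sup>2 \<le>
   total_prob f g (xs @ [True]) * (D_list f g (xs @ [True]))\<^sup>2 +
   total_prob f g (xs @ [False]) * (D_list f g (xs @ [False]))\<^sup>2"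
  using weighted_mean_square_le[OF total_prob_nonneg total_prob_nonneg D_list_martingale[of f g xs]]
  by (simp add: total_prob_split)

lemma incseq_energy: "incseq (energy f g)"
  by (rule incseq_SucI)
    (simp add: energy_def sum_bool_lists_length_Suc sum_mono D_list_square_submartingale)

lemma energy_le_2: "energy f g m \<le> 2"
proof -
  have "energy f g m \<le> (\<Sum>xs | length xs = m. total_prob f g xs)"
    unfolding energy_def
  proof (rule sum_mono)
    fix xs
    have "(D_list f g xs)\<^sup>2 \<le> 1"
      using D_list_nonneg D_list_le_1 by (simp add: power_le_one)
    thus "total_prob f g xs * (D_list f g xs)\<^sup>2 \<le> total_prob f g xs"
      using total_prob_nonneg by (simp add: mult_left_le)
  qed
  also have "\<dots> = 2"
    by (simp add: total_prob_def sum.distrib sum_path_prob)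
  finally show ?thesis .
qed

text \<open>Orthogonality of martingale increments.\<close>

lemma energy_increment:
  assumes "N \<le> m"
  shows "(\<Sum>xs | length xs = m. total_prob f g xs * (D_list f g xs - D_list f g (take N xs))\<^sup>2)
    = energy f g m - energy f g N"
  using assms
proof (induction m rule: dec_induct)
  case base
  have "(\<Sum>xs | length xs = N. total_prob f g xs * (D_list f g xs - D_list f g (take N xs))\<^sup>2) = 0"
    by (rule sum.neutral) auto
  thus ?case by simp
next
  case (step m)
  let ?W = "total_prob f g" and ?D = "D_list f g"
  have "(\<Sum>xs | length xs = Suc m. ?W xs * (?D xs - ?D (take N xs))\<^sup>2)
      = (\<Sum>xs | length xs = m. ?W xs * (?D xs - ?D (take N xs))\<^sup>2 +
          (?W (xs @ [True]) * (?D (xs @ [True]))\<^sup>2 + ?W (xs @ [False]) * (?D (xs @ [False]))\<^sup>2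
           - ?W xs * (?D xs)\<^sup>2))"
    unfolding sum_bool_lists_length_Suc
  proof (rule sum.cong)
    fix xs :: "bool list" assume "xs \<in> {xs. length xs = m}"
    hence "take N (xs @ [x]) = take N xs" for x
      using step.hyps by simp
    thus "?W (xs @ [True]) * (?D (xs @ [True]) - ?D (take N (xs @ [True])))\<^sup>2 +
        ?W (xs @ [False]) * (?D (xs @ [False]) - ?D (take N (xs @ [False])))\<^sup>2 =
        ?W xs * (?D xs - ?D (take N xs))\<^sup>2 +
        (?W (xs @ [True]) * (?D (xs @ [True]))\<^sup>2 + ?W (xs @ [False]) * (?D (xs @ [False]))\<^sup>2 -
         ?W xs * (?D xs)\<^sup>2)"
      using weighted_square_shift[OF D_list_martingale, of f g xs "?D (take N xs)"]
      by (simp add: total_prob_split)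
  qed simp
  also have "\<dots> = (energy f g m - energy f g N) + (energy f g (Suc m) - energy f g m)"
    unfolding sum.distrib step.IH energy_def sum_bool_lists_length_Suc sum_subtractf by simp
  finally show ?case by simp
qed

lemma measure_D_list_deviation_le:
  assumes M: "induced_measure_fst f g M" and "0 < \<theta>"
    and tail: "\<And>m. N \<le> m \<Longrightarrow> energy f g m - energy f g N \<le> e"
  defines "Dev \<equiv> {\<omega>. \<exists>k\<ge>N. \<theta> \<le> (D_list f g (prefix_seq \<omega> k) - D_list f g (prefix_seq \<omega> N))\<^sup>2}"
  shows "Dev \<in> sets M" and "measure M Dev \<le> e / \<theta>"
proof -
  define X where "X xs = (D_list f g xs - D_list f g (take N xs))\<^sup>2" for xs
  have Dev_eq: "Dev = {\<omega>. \<exists>k\<ge>N. \<theta> \<le> X (prefix_seq \<omega> k)}"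
    unfolding Dev_def X_def by (auto simp: take_prefix_seq)
  have "(\<Sum>xs | length xs = m \<and> reaches \<theta> X N m xs. path_prob f f g xs) \<le> e / \<theta>"
    if "N \<le> m" for m
  proof -
    have "\<theta> * (\<Sum>xs | length xs = m \<and> reaches \<theta> X N m xs. total_prob f g xs)
        \<le> (\<Sum>xs | length xs = m. total_prob f g xs * X xs)"
    proof (rule doob_maximal_inequality[OF total_prob_nonneg _ total_prob_split _ that])
      fix xs :: "bool list" assume "N \<le> length xs"
      hence "take N (xs @ [x]) = take N xs" for x
        by simp
      thus "total_prob f g xs * X xs \<le>
          total_prob f g (xs @ [True]) * X (xs @ [True]) + total_prob f g (xs @ [False]) * X (xs @ [False])"
        unfolding X_def
        using weighted_square_shift[OF D_list_martingale, of f g xs "D_list f g (take N xs)"]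
          D_list_square_submartingale[of f g xs] by (simp add: total_prob_split)
    qed (simp add: X_def)
    also have "\<dots> \<le> e"
      unfolding X_def energy_increment[OF that] using tail[OF that] .
    finally have "(\<Sum>xs | length xs = m \<and> reaches \<theta> X N m xs. total_prob f g xs) \<le> e / \<theta>"
      using \<open>0 < \<theta>\<close> by (simp add: pos_le_divide_eq mult.commute)
    moreover have "(\<Sum>xs | length xs = m \<and> reaches \<theta> X N m xs. path_prob f f g xs)
        \<le> (\<Sum>xs | length xs = m \<and> reaches \<theta> X N m xs. total_prob f g xs)"
      by (rule sum_mono) (rule path_prob_le_total_prob)
    ultimately show ?thesis by linarith
  qed
  thus "Dev \<in> sets M" and "measure M Dev \<le> e / \<theta>"
    unfolding Dev_eq using measure_reaching_event_le[OF M] by auto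
qed

lemma Cauchy_if_tail_oscillation_le:
  fixes s :: "nat \<Rightarrow> real"
  assumes "\<And>j k. N j \<le> k \<Longrightarrow> \<bar>s k - s (N j)\<bar> < (1/2) ^ j"
  shows "Cauchy s"
proof (rule CauchyI)
  fix r :: real assume "0 < r"
  then obtain j where j: "(1/2::real) ^ j < r / 2"
    using real_arch_pow_inv[of "r / 2" "1/2::real"] by auto
  show "\<exists>M. \<forall>m\<ge>M. \<forall>n\<ge>M. norm (s m - s n) < r"
  proof (intro exI[of _ "N j"] allI impI)
    fix m n assume "N j \<le> m" "N j \<le> n"
    thus "norm (s m - s n) < r"
      using assms[of j m] assms[of j n] j by auto
  qed
qed

lemma D_list_convergent_except_small:
  assumes M: "induced_measure_fst f g M" and "0 < \<delta>"
  shows "\<exists>B\<in>sets M. measure M B \<le> \<delta> \<and> (\<forall>\<omega>. \<omega> \<notin> B \<longrightarrow> convergent (\<lambda>k. D_list f g (prefix_seq \<omega> k)))"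
proof -
  interpret prob_space M
    using M by (rule induced_measure_prob_space)
  define \<theta> where "\<theta> j = ((1/2::real) ^ j)\<^sup>2" for j
  define e where "e j = \<theta> j * (\<delta> / 2 * (1/2) ^ j)" for j
  have \<theta>_pos: "0 < \<theta> j" and e_pos: "0 < e j" for j
    using \<open>0 < \<delta>\<close> by (simp_all add: \<theta>_def e_def)
  have "\<forall>i. energy f g i \<le> 2"
    by (simp add: energy_le_2)
  then obtain L where "energy f g \<longlonglongrightarrow> L"
    by (rule incseq_convergent[OF incseq_energy])
  hence "Cauchy (energy f g)"
    by (rule LIMSEQ_imp_Cauchy)
  have tail_small: "\<forall>j. \<exists>N. \<forall>m\<ge>N. energy f g m - energy f g N \<le> e j"
  proof
    fix j
    obtain N where N: "\<forall>m\<ge>N. \<forall>n\<ge>N. norm (energy f g m - energy f g n) < e j"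
      using CauchyD[OF \<open>Cauchy (energy f g)\<close> e_pos] by blast
    show "\<exists>N. \<forall>m\<ge>N. energy f g m - energy f g N \<le> e j"
    proof (intro exI[of _ N] allI impI)
      fix m assume "N \<le> m"
      hence "\<bar>energy f g m - energy f g N\<bar> < e j"
        using N by simp
      thus "energy f g m - energy f g N \<le> e j"
        by (simp add: abs_less_iff)
    qed
  qed
  obtain N where "\<forall>j. \<forall>m\<ge>N j. energy f g m - energy f g (N j) \<le> e j"
    using choice[OF tail_small] by blast
  hence N: "\<And>j m. N j \<le> m \<Longrightarrow> energy f g m - energy f g (N j) \<le> e j"
    by blast
  define B where
    "B j = {\<omega>. \<exists>k\<ge>N j. \<theta> j \<le> (D_list f g (prefix_seq \<omega> k) - D_list f g (prefix_seq \<omega> (N j)))\<^sup>2}" for j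
  have B_sets: "B j \<in> sets M" and B_meas: "measure M (B j) \<le> \<delta> / 2 * (1/2) ^ j" for j
  proof -
    have tail: "\<And>m. N j \<le> m \<Longrightarrow> energy f g m - energy f g (N j) \<le> e j"
      by (rule N)
    show "B j \<in> sets M"
      unfolding B_def by (rule measure_D_list_deviation_le(1)[OF M \<theta>_pos tail])
    have "measure M (B j) \<le> e j / \<theta> j"
      unfolding B_def by (rule measure_D_list_deviation_le(2)[OF M \<theta>_pos tail])
    also have "\<dots> = \<delta> / 2 * (1/2) ^ j"
      using \<theta>_pos[of j] by (simp add: e_def)
    finally show "measure M (B j) \<le> \<delta> / 2 * (1/2) ^ j" .
  qed
  have geometric: "(\<lambda>j. \<delta> / 2 * (1/2::real) ^ j) sums \<delta>"
    using sums_mult[OF geometric_sums[of "1/2::real"], of "\<delta> / 2"] by simp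
  have summable: "summable (\<lambda>j. measure M (B j))"
  proof (rule summable_comparison_test'[OF sums_summable[OF geometric], of 0])
    fix j
    show "norm (measure M (B j)) \<le> \<delta> / 2 * (1/2) ^ j"
      using B_meas[of j] by simp
  qed
  have "measure M (\<Union>j. B j) \<le> (\<Sum>j. measure M (B j))"
    by (rule finite_measure_subadditive_countably) (use B_sets summable in auto)
  also have "\<dots> \<le> \<delta>"
    using suminf_le[OF B_meas summable sums_summable[OF geometric]] geometric by (simp add: sums_iff)
  finally have "measure M (\<Union>j. B j) \<le> \<delta>" .
  moreover have "convergent (\<lambda>k. D_list f g (prefix_seq \<omega> k))" if "\<omega> \<notin> (\<Union>j. B j)" for \<omega>
  proof -
    have "\<bar>D_list f g (prefix_seq \<omega> k) - D_list f g (prefix_seq \<omega> (N j))\<bar> < (1/2) ^ j"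
      if "N j \<le> k" for j k
    proof -
      have "\<not> ((1/2) ^ j)\<^sup>2 \<le> (D_list f g (prefix_seq \<omega> k) - D_list f g (prefix_seq \<omega> (N j)))\<^sup>2"
        using \<open>\<omega> \<notin> (\<Union>j. B j)\<close> that unfolding B_def \<theta>_def by blast
      thus ?thesis
        using abs_le_square_iff[of "(1/2::real) ^ j" "D_list f g (prefix_seq \<omega> k) - D_list f g (prefix_seq \<omega> (N j))"]
        by (simp add: not_le)
    qed
    hence "Cauchy (\<lambda>k. D_list f g (prefix_seq \<omega> k))"
      by (rule Cauchy_if_tail_oscillation_le)
    thus ?thesis
      by (simp add: Cauchy_convergent_iff)
  qed
  ultimately show ?thesis
    using B_sets by (intro bexI[of _ "\<Union>j. B j"]) auto
qed
section \<open>The f-supermartingale 1 - D\<close>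

lemma harmonic_mean_superadditive:
  fixes a b c d :: real
  assumes "0 \<le> a" "0 \<le> b" "0 \<le> c" "0 \<le> d"
  shows "(if a + b = 0 then 0 else a * b / (a + b)) + (if c + d = 0 then 0 else c * d / (c + d))
     \<le> (if a + b + c + d = 0 then 0 else (a + c) * (b + d) / (a + b + c + d))"
proof (cases "a + b = 0 \<or> c + d = 0")
  case True
  with assms show ?thesis by (auto simp: add_nonneg_eq_0_iff)
next
  case False
  hence pos: "0 < a + b" "0 < c + d"
    using assms by auto
  have "(a + c) * (b + d) * ((a + b) * (c + d)) - (a * b * (c + d) + c * d * (a + b)) * (a + b + c + d)
      = (a * d - b * c)\<^sup>2"
    by (simp add: power2_eq_square algebra_simps)
  hence key: "(a * b * (c + d) + c * d * (a + b)) * (a + b + c + d) \<le> (a + c) * (b + d) * ((a + b) * (c + d))"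
    by (metis diff_ge_0_iff_ge zero_le_power2)
  have "a * b / (a + b) + c * d / (c + d) = (a * b * (c + d) + c * d * (a + b)) / ((a + b) * (c + d))"
    using pos by (simp add: field_simps)
  also have "\<dots> \<le> (a + c) * (b + d) / (a + b + c + d)"
    using pos key by (simp add: divide_simps add_pos_pos)
  finally show ?thesis
    using pos by simp
qed

lemma path_prob_mult_one_minus_D_list:
  "path_prob f f g xs * (1 - D_list f g xs) = (if total_prob f g xs = 0 then 0
     else path_prob f f g xs * path_prob g f g xs / total_prob f g xs)"
proof (cases "total_prob f g xs = 0")
  case True
  hence "path_prob f f g xs = 0"
    using path_prob_nonneg[of f f g xs] path_prob_nonneg[of g f g xs] by (simp add: total_prob_def)
  thus ?thesis
    by simp
next
  case False
  hence "0 < total_prob f g xs"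
    using total_prob_nonneg[of f g xs] by linarith
  hence "D_list f g xs = path_prob f f g xs / total_prob f g xs"
    using path_prob_nonneg[of f f g xs] path_prob_nonneg[of g f g xs]
    by (auto simp: D_list_def total_prob_def)
  moreover have "path_prob f f g xs * (1 - path_prob f f g xs / total_prob f g xs)
      = path_prob f f g xs * path_prob g f g xs / total_prob f g xs"
    using \<open>0 < total_prob f g xs\<close> by (simp add: field_simps total_prob_def)
  ultimately show ?thesis
    using False by simp
qed

lemma one_minus_D_list_supermartingale:
  "path_prob f f g (xs @ [True]) * (1 - D_list f g (xs @ [True])) +
   path_prob f f g (xs @ [False]) * (1 - D_list f g (xs @ [False]))
   \<le> path_prob f f g xs * (1 - D_list f g xs)"
proof -
  let ?a = "path_prob f f g (xs @ [True])" and ?b = "path_prob g f g (xs @ [True])"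
    and ?c = "path_prob f f g (xs @ [False])" and ?d = "path_prob g f g (xs @ [False])"
  have sums: "?a + ?c = path_prob f f g xs" "?b + ?d = path_prob g f g xs"
      "?a + ?b + ?c + ?d = total_prob f g xs"
    using path_prob_split[of f f g xs] path_prob_split[of g f g xs] by (simp_all add: total_prob_def)
  have "(if ?a + ?b = 0 then 0 else ?a * ?b / (?a + ?b)) + (if ?c + ?d = 0 then 0 else ?c * ?d / (?c + ?d))
      \<le> (if ?a + ?b + ?c + ?d = 0 then 0 else (?a + ?c) * (?b + ?d) / (?a + ?b + ?c + ?d))"
    by (rule harmonic_mean_superadditive[OF path_prob_nonneg path_prob_nonneg path_prob_nonneg path_prob_nonneg])
  thus ?thesis
    unfolding sums path_prob_mult_one_minus_D_list total_prob_def[of f g "xs @ [True]"]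
      total_prob_def[of f g "xs @ [False]"] .
qed

lemma measure_D_list_drop_le:
  fixes n :: nat
  assumes M: "induced_measure_fst f g M" and "0 \<le> \<eta>" "0 < lam"
  defines "Drop \<equiv> {\<omega>. 1 - D_list f g (prefix_seq \<omega> n) \<le> \<eta> \<and> (\<exists>k\<ge>n. lam \<le> 1 - D_list f g (prefix_seq \<omega> k))}"
  shows "Drop \<in> sets M" and "measure M Drop \<le> \<eta> / lam"
proof -
  define Y where "Y xs = (if 1 - D_list f g (take n xs) \<le> \<eta> then 1 - D_list f g xs else 0)" for xs
  have Drop_eq: "Drop = {\<omega>. \<exists>k\<ge>n. lam \<le> Y (prefix_seq \<omega> k)}"
    unfolding Drop_def Y_def using \<open>0 < lam\<close> by (auto simp: take_prefix_seq)
  have "(\<Sum>xs | length xs = m \<and> reaches lam Y n m xs. path_prob f f g xs) \<le> \<eta> / lam"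
    if "n \<le> m" for m
  proof -
    have "lam * (\<Sum>xs | length xs = m \<and> reaches lam Y n m xs. path_prob f f g xs)
        \<le> (\<Sum>xs | length xs = n. path_prob f f g xs * Y xs)"
    proof (rule ville_inequality[OF path_prob_nonneg _ path_prob_split _ that])
      fix xs :: "bool list" assume "n \<le> length xs"
      thus "path_prob f f g (xs @ [True]) * Y (xs @ [True]) + path_prob f f g (xs @ [False]) * Y (xs @ [False])
          \<le> path_prob f f g xs * Y xs"
        using one_minus_D_list_supermartingale[of f g xs] by (simp add: Y_def)
    qed (simp add: Y_def D_list_le_1)
    also have "\<dots> \<le> (\<Sum>xs | length xs = n. path_prob f f g xs * \<eta>)"
      by (rule sum_mono) (use \<open>0 \<le> \<eta>\<close> in \<open>auto simp: Y_def path_prob_nonneg intro: mult_left_mono\<close>)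
    also have "\<dots> = \<eta>"
      by (simp add: sum_distrib_right[symmetric] sum_path_prob)
    finally show ?thesis
      using \<open>0 < lam\<close> by (simp add: pos_le_divide_eq mult.commute)
  qed
  thus "Drop \<in> sets M" and "measure M Drop \<le> \<eta> / lam"
    unfolding Drop_eq using measure_reaching_event_le[OF M] by auto
qed

definition not_close :: "strategy \<Rightarrow> strategy \<Rightarrow> real \<Rightarrow> bool list \<Rightarrow> bool" where
  "not_close f g \<epsilon> xs \<longleftrightarrow>
     \<epsilon> \<le> \<bar>pmf (f (play_history f g xs)) True - pmf (g (play_history f g xs)) True\<bar>"

definition count_not_close :: "strategy \<Rightarrow> strategy \<Rightarrow> real \<Rightarrow> bool list \<Rightarrow> nat" where
  "count_not_close f g \<epsilon> xs = card {i. i < length xs \<and> not_close f g \<epsilon> (take i xs)}"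

lemma count_not_close_snoc:
  "count_not_close f g \<epsilon> (xs @ [x]) = count_not_close f g \<epsilon> xs + (if not_close f g \<epsilon> xs then 1 else 0)"
proof -
  have "{i. i < length (xs @ [x]) \<and> not_close f g \<epsilon> (take i (xs @ [x]))} =
      {i. i < length xs \<and> not_close f g \<epsilon> (take i xs)} \<union> (if not_close f g \<epsilon> xs then {length xs} else {})"
    by (auto simp: less_Suc_eq)
  thus ?thesis
    unfolding count_not_close_def by auto
qed

lemma not_eps_close_Suc_iff: "\<not> eps_close f g \<epsilon> \<omega> (Suc i) \<longleftrightarrow> not_close f g \<epsilon> (prefix_seq \<omega> i)"
proof -
  have "\<bar>pmf p (\<omega> i) - pmf q (\<omega> i)\<bar> = \<bar>pmf p True - pmf q True\<bar>" for p q :: "bool pmf"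
    by (cases "\<omega> i") (simp_all add: pmf_False_conv_True abs_minus_commute)
  thus ?thesis
    unfolding eps_close_def not_close_def play_history_prefix_seq by (simp add: not_less)
qed

lemma card_not_eps_close_eq:
  "card {t \<in> {1..n}. \<not> eps_close f g \<epsilon> \<omega> t} = count_not_close f g \<epsilon> (prefix_seq \<omega> n)"
proof -
  have "{t \<in> {1..n}. \<not> eps_close f g \<epsilon> \<omega> t} = Suc ` {i. i < n \<and> \<not> eps_close f g \<epsilon> \<omega> (Suc i)}"
    unfolding image_Suc_lessThan[symmetric] by auto
  also have "{i. i < n \<and> \<not> eps_close f g \<epsilon> \<omega> (Suc i)} =
      {i. i < length (prefix_seq \<omega> n) \<and> not_close f g \<epsilon> (take i (prefix_seq \<omega> n))}"
    by (auto simp: not_eps_close_Suc_iff take_prefix_seq)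
  finally show ?thesis
    unfolding count_not_close_def by (simp add: card_image)
qed

section \<open>The Hellinger supermartingale\<close>

lemma sqrt_mult_add_sqrt_mult_le:
  fixes p q :: real
  assumes "0 \<le> p" "p \<le> 1" "0 \<le> q" "q \<le> 1"
  shows "sqrt (p * q) + sqrt ((1 - p) * (1 - q)) \<le> sqrt (1 - (p - q)\<^sup>2)"
proof (rule real_le_rsqrt)
  define s where "s = sqrt (p * (1 - p))"
  define t where "t = sqrt (q * (1 - q))"
  have s2: "s\<^sup>2 = p * (1 - p)" and t2: "t\<^sup>2 = q * (1 - q)"
    using assms by (simp_all add: s_def t_def)
  have "sqrt (p * q) * sqrt ((1 - p) * (1 - q)) = s * t"
    unfolding s_def t_def real_sqrt_mult[symmetric] by (simp add: algebra_simps)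
  hence "(sqrt (p * q) + sqrt ((1 - p) * (1 - q)))\<^sup>2 = p * q + (1 - p) * (1 - q) + 2 * (s * t)"
    using assms by (simp add: power2_sum)
  also have "\<dots> \<le> p * q + (1 - p) * (1 - q) + (s\<^sup>2 + t\<^sup>2)"
    using sum_squares_bound[of s t] by simp
  also have "\<dots> = 1 - (p - q)\<^sup>2"
    unfolding s2 t2 by (simp add: power2_eq_square algebra_simps)
  finally show "(sqrt (p * q) + sqrt ((1 - p) * (1 - q)))\<^sup>2 \<le> 1 - (p - q)\<^sup>2" .
qed

text \<open>The Hellinger affinity sqrt (F G) of the two forecasters shrinks by the factor
  sqrt (1 - \<epsilon>^2) at every period at which their forecasts differ by at least \<epsilon>.\<close>

definition hellinger_weight :: "strategy \<Rightarrow> strategy \<Rightarrow> real \<Rightarrow> bool list \<Rightarrow> real" where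
  "hellinger_weight f g \<epsilon> xs =
     sqrt (path_prob f f g xs * path_prob g f g xs) / sqrt (1 - \<epsilon>\<^sup>2) ^ count_not_close f g \<epsilon> xs"

lemma hellinger_weight_nonneg:
  assumes "0 < \<epsilon>" "\<epsilon> < 1"
  shows "0 \<le> hellinger_weight f g \<epsilon> xs"
proof -
  have "0 \<le> sqrt (1 - \<epsilon>\<^sup>2)"
    using assms by (simp add: power_le_one)
  thus ?thesis
    by (simp add: hellinger_weight_def path_prob_nonneg)
qed

lemma hellinger_weight_supermartingale:
  assumes "0 < \<epsilon>" "\<epsilon> < 1"
  shows "hellinger_weight f g \<epsilon> (xs @ [True]) + hellinger_weight f g \<epsilon> (xs @ [False]) \<le> hellinger_weight f g \<epsilon> xs"
proof -
  define c where "c = sqrt (1 - \<epsilon>\<^sup>2)"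
  define p where "p = pmf (f (play_history f g xs)) True"
  define q where "q = pmf (g (play_history f g xs)) True"
  define F where "F = path_prob f f g xs"
  define G where "G = path_prob g f g xs"
  define A where "A = sqrt (F * G)"
  define N where "N = count_not_close f g \<epsilon> xs"
  have c: "0 < c" "c \<le> 1"
    using assms by (simp_all add: c_def power_less_one_iff abs_square_less_1)
  have pq: "0 \<le> p" "p \<le> 1" "0 \<le> q" "q \<le> 1"
    by (simp_all add: p_def q_def pmf_le_1)
  have sqrt_split: "sqrt (F * p * (G * q)) = A * sqrt (p * q)"
      "sqrt (F * (1 - p) * (G * (1 - q))) = A * sqrt ((1 - p) * (1 - q))"
    by (simp_all add: A_def real_sqrt_mult[symmetric] algebra_simps)
  have split: "hellinger_weight f g \<epsilon> (xs @ [True]) + hellinger_weight f g \<epsilon> (xs @ [False]) =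
      A * (sqrt (p * q) + sqrt ((1 - p) * (1 - q))) / c ^ (N + (if not_close f g \<epsilon> xs then 1 else 0))"
    unfolding hellinger_weight_def count_not_close_snoc path_prob_snoc pmf_False_conv_True
      F_def[symmetric] G_def[symmetric] p_def[symmetric] q_def[symmetric] N_def[symmetric] c_def[symmetric]
    using sqrt_split by (simp add: add_divide_distrib distrib_left)
  have "sqrt (p * q) + sqrt ((1 - p) * (1 - q)) \<le> (if not_close f g \<epsilon> xs then c else 1)"
  proof -
    have "sqrt (1 - (p - q)\<^sup>2) \<le> (if not_close f g \<epsilon> xs then c else 1)"
    proof (cases "not_close f g \<epsilon> xs")
      case True
      hence "\<epsilon>\<^sup>2 \<le> (p - q)\<^sup>2"
        using abs_le_square_iff[of \<epsilon> "p - q"] \<open>0 < \<epsilon>\<close> by (simp add: not_close_def p_def q_def)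
      thus ?thesis
        using True by (simp add: c_def)
    qed simp
    thus ?thesis
      using sqrt_mult_add_sqrt_mult_le[OF pq] by linarith
  qed
  hence "A * (sqrt (p * q) + sqrt ((1 - p) * (1 - q))) / c ^ (N + (if not_close f g \<epsilon> xs then 1 else 0))
      \<le> A * (if not_close f g \<epsilon> xs then c else 1) / c ^ (N + (if not_close f g \<epsilon> xs then 1 else 0))"
    using c by (intro divide_right_mono mult_left_mono) (auto simp: A_def F_def G_def path_prob_nonneg)
  also have "\<dots> = hellinger_weight f g \<epsilon> xs"
    using c by (simp add: hellinger_weight_def A_def F_def G_def N_def c_def)
  finally show ?thesis
    unfolding split .
qed

lemma sum_hellinger_weight_le_1:
  assumes "0 < \<epsilon>" "\<epsilon> < 1"
  shows "(\<Sum>xs | length xs = m. hellinger_weight f g \<epsilon> xs) \<le> 1"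
proof (induction m)
  case 0
  have "{xs :: bool list. length xs = 0} = {[]}"
    by auto
  thus ?case
    by (simp add: hellinger_weight_def count_not_close_def)
next
  case (Suc m)
  have "(\<Sum>xs | length xs = Suc m. hellinger_weight f g \<epsilon> xs) \<le> (\<Sum>xs | length xs = m. hellinger_weight f g \<epsilon> xs)"
    unfolding sum_bool_lists_length_Suc by (rule sum_mono) (rule hellinger_weight_supermartingale[OF assms])
  with Suc show ?case by linarith
qed

text \<open>When D is not close to 1 the forecasters' probabilities are comparable, so F is bounded
  by a multiple of sqrt (F G).\<close>

lemma path_prob_le_hellinger_weight:
  assumes "0 < \<epsilon>" "\<epsilon> < 1" "0 < \<eta>"
    and "K \<le> count_not_close f g \<epsilon> xs" "\<eta> < 1 - D_list f g xs"
  shows "path_prob f f g xs \<le> sqrt (1 - \<epsilon>\<^sup>2) ^ K / sqrt \<eta> * hellinger_weight f g \<epsilon> xs"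
proof -
  define F where "F = path_prob f f g xs"
  define G where "G = path_prob g f g xs"
  define c where "c = sqrt (1 - \<epsilon>\<^sup>2)"
  define N where "N = count_not_close f g \<epsilon> xs"
  have FG: "0 \<le> F" "0 \<le> G"
    by (simp_all add: F_def G_def path_prob_nonneg)
  have c: "0 < c" "c \<le> 1"
    using assms by (simp_all add: c_def power_less_one_iff abs_square_less_1)
  show ?thesis
  proof (cases "F = 0")
    case True
    have "0 \<le> c ^ K / sqrt \<eta> * hellinger_weight f g \<epsilon> xs"
      using c \<open>0 < \<eta>\<close> hellinger_weight_nonneg[OF assms(1,2)] by simp
    thus ?thesis
      using True by (simp add: F_def c_def)
  next
    case False
    hence "0 < F"
      using FG by simp
    hence "\<eta> < G / (F + G)"
      using \<open>\<eta> < 1 - D_list f g xs\<close> FG by (simp add: D_list_def F_def G_def field_simps)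
    hence "\<eta> * F * F \<le> F * G"
      using \<open>0 < F\<close> FG \<open>0 < \<eta>\<close> by (simp add: field_simps) (smt (verit) mult_nonneg_nonneg)
    hence "sqrt \<eta> * F \<le> sqrt (F * G)"
      using \<open>0 < F\<close> by (metis real_sqrt_le_mono real_sqrt_mult real_sqrt_abs2 abs_of_pos mult.assoc)
    hence "F \<le> c ^ N / sqrt \<eta> * (sqrt (F * G) / c ^ N)"
      using c \<open>0 < \<eta>\<close> by (simp add: field_simps)
    also have "\<dots> \<le> c ^ K / sqrt \<eta> * (sqrt (F * G) / c ^ N)"
      using c \<open>0 < \<eta>\<close> \<open>K \<le> count_not_close f g \<epsilon> xs\<close>
      by (intro mult_right_mono divide_right_mono) (use FG in \<open>auto simp: N_def power_decreasing\<close>)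
    finally show ?thesis
      by (simp add: F_def G_def c_def N_def hellinger_weight_def)
  qed
qed

lemma measure_not_close_often_D_list_low_le:
  assumes M: "induced_measure_fst f g M" and "0 < \<epsilon>" "\<epsilon> < 1" "0 < \<eta>"
  shows "measure M {\<omega>. K \<le> count_not_close f g \<epsilon> (prefix_seq \<omega> n) \<and> \<eta> < 1 - D_list f g (prefix_seq \<omega> n)}
    \<le> sqrt (1 - \<epsilon>\<^sup>2) ^ K / sqrt \<eta>"
proof -
  let ?b = "sqrt (1 - \<epsilon>\<^sup>2) ^ K / sqrt \<eta>"
  have "0 \<le> sqrt (1 - \<epsilon>\<^sup>2)"
    using assms by (simp add: power_le_one)
  hence b_nonneg: "0 \<le> ?b"
    using assms by simp
  have "measure M {\<omega>. K \<le> count_not_close f g \<epsilon> (prefix_seq \<omega> n) \<and> \<eta> < 1 - D_list f g (prefix_seq \<omega> n)}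
      \<le> (\<Sum>xs | length xs = n \<and> K \<le> count_not_close f g \<epsilon> xs \<and> \<eta> < 1 - D_list f g xs. path_prob f f g xs)"
    using measure_prefix_event_le[OF M, of "\<lambda>xs. K \<le> count_not_close f g \<epsilon> xs \<and> \<eta> < 1 - D_list f g xs" n]
    by simp
  also have "\<dots> \<le> (\<Sum>xs | length xs = n. ?b * hellinger_weight f g \<epsilon> xs)"
    unfolding sum_bool_lists_filter
  proof (rule sum_mono)
    fix xs
    have "0 \<le> ?b * hellinger_weight f g \<epsilon> xs"
      by (rule mult_nonneg_nonneg[OF b_nonneg hellinger_weight_nonneg[OF assms(2,3)]])
    thus "(if K \<le> count_not_close f g \<epsilon> xs \<and> \<eta> < 1 - D_list f g xs then path_prob f f g xs else 0)
        \<le> ?b * hellinger_weight f g \<epsilon> xs"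
      using path_prob_le_hellinger_weight[OF assms(2-4), of K f g xs] by auto
  qed
  also have "\<dots> = ?b * (\<Sum>xs | length xs = n. hellinger_weight f g \<epsilon> xs)"
    by (simp add: sum_distrib_left)
  also have "\<dots> \<le> ?b"
    by (rule mult_left_le[OF sum_hellinger_weight_le_1[OF assms(2,3)] b_nonneg])
  finally show ?thesis .
qed

lemma prefix_seq_Suc: "prefix_seq \<omega> (Suc n) = prefix_seq \<omega> n @ [\<omega> n]"
  by (simp add: prefix_seq_def)

lemma D_test_settles:
  assumes conv: "convergent (\<lambda>k. D_list f g (prefix_seq \<omega> k))"
    and high: "\<And>k. n \<le> k \<Longrightarrow> 1 - D_list f g (prefix_seq \<omega> k) < lam" and "lam < \<epsilon>"
  shows "\<omega> \<in> L_D f g (1 - \<epsilon>)"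
    and "\<forall>t\<ge>Suc n. \<bar>D_test f g \<omega> t - D_test f g \<omega> (Suc n)\<bar> < \<epsilon>"
proof -
  define s where "s = (\<lambda>k. D_list f g (prefix_seq \<omega> k))"
  have D_test_eq: "(\<lambda>k. D_test f g \<omega> (Suc k)) = s"
    by (simp add: s_def D_test_Suc)
  have "s \<longlonglongrightarrow> lim s"
    using conv by (simp add: s_def convergent_LIMSEQ_iff)
  hence lim_D: "D_test f g \<omega> \<longlonglongrightarrow> lim s"
    unfolding D_test_eq[symmetric] by (rule LIMSEQ_imp_Suc)
  have "1 - lam \<le> lim s"
    by (rule LIMSEQ_le_const[OF \<open>s \<longlonglongrightarrow> lim s\<close>]) (use high in \<open>force simp: s_def\<close>)
  thus "\<omega> \<in> L_D f g (1 - \<epsilon>)"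
    using lim_D \<open>lam < \<epsilon>\<close> by (auto simp: L_D_def convergent_def limI)
  show "\<forall>t\<ge>Suc n. \<bar>D_test f g \<omega> t - D_test f g \<omega> (Suc n)\<bar> < \<epsilon>"
  proof (intro allI impI)
    fix t assume "Suc n \<le> t"
    then obtain k where "t = Suc k" "n \<le> k"
      by (cases t) auto
    thus "\<bar>D_test f g \<omega> t - D_test f g \<omega> (Suc n)\<bar> < \<epsilon>"
      using high[of k] high[of n] D_list_le_1[of f g "prefix_seq \<omega> k"] D_list_le_1[of f g "prefix_seq \<omega> n"]
        \<open>lam < \<epsilon>\<close> by (auto simp: D_test_Suc abs_diff_less_iff)
  qed
qed

lemma (in prob_space) prob_compl_Un3_ge:
  assumes "A \<in> events" "B \<in> events" "C \<in> events" "prob A + prob B + prob C \<le> \<delta>"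
  shows "1 - \<delta> \<le> prob (space M - (A \<union> B \<union> C))"
proof -
  have "prob (A \<union> B \<union> C) \<le> prob (A \<union> B) + prob C"
    using assms by (intro measure_Un_le) auto
  moreover have "prob (A \<union> B) \<le> prob A + prob B"
    using assms by (intro measure_Un_le) auto
  moreover have "prob (space M - (A \<union> B \<union> C)) = 1 - prob (A \<union> B \<union> C)"
    using assms by (intro prob_compl) auto
  ultimately show ?thesis
    using assms(4) by linarith
qed

lemma exists_pos_power_less:
  fixes b c :: real
  assumes "c < 1" "0 < b" "b < 1"
  shows "\<exists>K>0. c ^ K < b"
proof -
  obtain K where "c ^ K < b"
    using real_arch_pow_inv[OF assms(2,1)] by blast
  moreover from this have "K \<noteq> 0"
    using assms(3) by (cases K) auto
  ultimately show ?thesis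
    by blast
qed

lemma exists_good_set:
  assumes M: "induced_measure_fst f g M" and \<epsilon>: "0 < \<epsilon>" "\<epsilon> < 1" and "0 < n"
    and K: "sqrt (1 - \<epsilon>\<^sup>2) ^ K / sqrt (\<epsilon>\<^sup>2 / 8) \<le> \<epsilon> / 4"
  shows "\<exists>S\<in>sets M. 1 - \<epsilon> \<le> measure M S \<and>
    (\<forall>\<omega>\<in>S. card {t \<in> {1..n}. \<not> eps_close f g \<epsilon> \<omega> t} \<le> K \<or>
      (\<omega> \<in> L_D f g (1 - \<epsilon>) \<and> (\<forall>t\<ge>n. \<bar>D_test f g \<omega> t - D_test f g \<omega> n\<bar> < \<epsilon>)))"
proof -
  interpret prob_space M
    using M by (rule induced_measure_prob_space)
  obtain n0 where n: "n = Suc n0"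
    using \<open>0 < n\<close> gr0_conv_Suc by blast
  define \<eta> :: real where "\<eta> = \<epsilon>\<^sup>2 / 8"
  have \<eta>: "0 < \<eta>" "\<eta> / (\<epsilon> / 2) = \<epsilon> / 4"
    using \<epsilon> by (simp_all add: \<eta>_def power2_eq_square)
  define Low where
    "Low = {\<omega>. K \<le> count_not_close f g \<epsilon> (prefix_seq \<omega> n0) \<and> \<eta> < 1 - D_list f g (prefix_seq \<omega> n0)}"
  define Drop where
    "Drop = {\<omega>. 1 - D_list f g (prefix_seq \<omega> n0) \<le> \<eta> \<and> (\<exists>k\<ge>n0. \<epsilon> / 2 \<le> 1 - D_list f g (prefix_seq \<omega> k))}"
  obtain Osc where Osc: "Osc \<in> sets M" "measure M Osc \<le> \<epsilon> / 4"
    and conv: "\<And>\<omega>. \<omega> \<notin> Osc \<Longrightarrow> convergent (\<lambda>k. D_list f g (prefix_seq \<omega> k))"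
    using D_list_convergent_except_small[OF M, of "\<epsilon> / 4"] \<epsilon> by auto
  have Low: "Low \<in> sets M" "measure M Low \<le> \<epsilon> / 4"
    unfolding Low_def
    using prefix_event_in_sets[OF M, of "\<lambda>xs. K \<le> count_not_close f g \<epsilon> xs \<and> \<eta> < 1 - D_list f g xs" n0]
      order_trans[OF measure_not_close_often_D_list_low_le[OF M \<epsilon> \<eta>(1)] K[folded \<eta>_def]] by simp_all
  have Drop: "Drop \<in> sets M" "measure M Drop \<le> \<epsilon> / 4"
    unfolding Drop_def using measure_D_list_drop_le[OF M, of \<eta> "\<epsilon> / 2" n0] \<eta> \<epsilon> by auto
  define S where "S = space M - (Low \<union> Drop \<union> Osc)"
  have "1 - \<epsilon> \<le> measure M S"
    unfolding S_def by (rule prob_compl_Un3_ge[OF Low(1) Drop(1) Osc(1)]) (use Low Drop Osc \<epsilon> in linarith)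
  moreover have "S \<in> sets M"
    unfolding S_def using Low Drop Osc by auto
  moreover have "\<omega> \<in> L_D f g (1 - \<epsilon>) \<and> (\<forall>t\<ge>n. \<bar>D_test f g \<omega> t - D_test f g \<omega> n\<bar> < \<epsilon>)"
    if "\<omega> \<in> S" "\<not> card {t \<in> {1..n}. \<not> eps_close f g \<epsilon> \<omega> t} \<le> K" for \<omega>
  proof -
    have "K \<le> count_not_close f g \<epsilon> (prefix_seq \<omega> n0)"
      using that(2) unfolding n card_not_eps_close_eq prefix_seq_Suc count_not_close_snoc
      by (auto split: if_splits)
    hence "1 - D_list f g (prefix_seq \<omega> n0) \<le> \<eta>"
      using that(1) by (auto simp: S_def Low_def)
    hence "\<not> \<epsilon> / 2 \<le> 1 - D_list f g (prefix_seq \<omega> k)" if "n0 \<le> k" for k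
      using \<open>\<omega> \<in> S\<close> that unfolding S_def Drop_def by blast
    hence "1 - D_list f g (prefix_seq \<omega> k) < \<epsilon> / 2" if "n0 \<le> k" for k
      using that by (simp add: not_le)
    moreover have "convergent (\<lambda>k. D_list f g (prefix_seq \<omega> k))"
      using that(1) conv by (auto simp: S_def)
    ultimately show ?thesis
      using D_test_settles[of f g \<omega> n0 "\<epsilon> / 2" \<epsilon>] \<epsilon> unfolding n by auto
  qed
  ultimately show ?thesis
    by blast
qed

theorem mainTheorem9:
  fixes \<epsilon> :: real
  assumes "0 < \<epsilon>" and "\<epsilon> < 1"
  shows "\<exists>K::nat. K > 0 \<and>
    (\<forall>(f::strategy) (g::strategy) (n::nat) M. n > 0 \<longrightarrow> induced_measure_fst f g M \<longrightarrow>
      (\<exists>S \<in> sets M. measure M S \<ge> 1 - \<epsilon> \<and>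
        (\<forall>\<omega>\<in>S.
          card {t \<in> {1..n}. \<not> eps_close f g \<epsilon> \<omega> t} \<le> K
          \<or> (\<omega> \<in> L_D f g (1 - \<epsilon>) \<and>
             (\<forall>t\<ge>n. \<bar>D_test f g \<omega> t - D_test f g \<omega> n\<bar> < \<epsilon>)))))"
proof -
  have "\<epsilon>\<^sup>2 < 1"
    using assms by (simp add: abs_square_less_1)
  hence "sqrt (\<epsilon>\<^sup>2 / 8) * (\<epsilon> / 4) \<le> \<epsilon> / 4"
    using assms by (intro mult_left_le_one_le) auto
  hence "sqrt (\<epsilon>\<^sup>2 / 8) * (\<epsilon> / 4) < 1"
    using assms by linarith
  moreover have "sqrt (1 - \<epsilon>\<^sup>2) < 1" "0 < sqrt (\<epsilon>\<^sup>2 / 8) * (\<epsilon> / 4)"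
    using assms by simp_all
  ultimately obtain K where "0 < K" "sqrt (1 - \<epsilon>\<^sup>2) ^ K < sqrt (\<epsilon>\<^sup>2 / 8) * (\<epsilon> / 4)"
    using exists_pos_power_less by blast
  hence "sqrt (1 - \<epsilon>\<^sup>2) ^ K / sqrt (\<epsilon>\<^sup>2 / 8) \<le> \<epsilon> / 4"
    using assms by (simp add: pos_divide_le_eq mult.commute)
  thus ?thesis
    using exists_good_set[OF _ assms] \<open>0 < K\<close> by blast
qed

end
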